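(* Let $\mathbf{x}$ be a feasible solution of $\textsc{Dir-MC-Rel}$ and let $\theta$ be uniform on $(0,1)$. Then $\mathbb{E}\big[\sum_{e\in C(\theta)}w_e\big]\le 2\sum_{e\in E}w_e x_e$.
   Context: $G=(V,E)$ is a directed graph with non-negative edge weights $w_e$ and distinct terminals $s_1,\dots,s_k$, $k\ge2$. For $i\neq j$, $\mathcal{P}_{ij}$ is the set of directed paths from $s_i$ to $s_j$ in $G$. $\textsc{Dir-MC-Rel}$: minimize $\sum_e w_e x_e$ s.t. $\sum_{e\in p}x_e\ge1$ for all $p\in\mathcal{P}_{ij}$, $i\ne j$, and $x\ge0$. Given feasible $\mathbf{x}$, form $G^+$ by adding new vertices $t_1,\dots,t_k$ and new edges $(t_i,s_j)$ for all $i\neq j$, each with $x$-value $0$. For vertices $u,v$ of $G^+$, $d(u,v)$ is the length of a shortest directed path from $u$ to $v$ in $G^+$ with edge lengths $\mathbf{x}$ ($+\infty$ if none). $B(v,r)=\{u: d(v,u)\le r\}$. For a vertex set $A$, $\delta^+(A)$ is the set of edges of $G^+$ with tail in $A$ and head not in $A$. For $\theta\in(0,1)$, $C(\theta)=\bigcup_{i=1}^k\delta^+(B(t_i,\theta))$. *)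

theory Defs
  imports "HOL-Analysis.Analysis"
begin

definition dpath :: "'v set \<Rightarrow> ('v \<times> 'v) set \<Rightarrow> 'v list \<Rightarrow> 'v \<Rightarrow> 'v \<Rightarrow> bool" where
  "dpath VV EE p u v \<longleftrightarrow> p \<noteq> [] \<and> hd p = u \<and> last p = v \<and> distinct p \<and> set p \<subseteq> VV
     \<and> (\<forall>n. Suc n < length p \<longrightarrow> (p ! n, p ! Suc n) \<in> EE)"

definition path_edges :: "'v list \<Rightarrow> ('v \<times> 'v) list" where
  "path_edges p = zip p (tl p)"

definition path_len :: "('v \<times> 'v \<Rightarrow> real) \<Rightarrow> 'v list \<Rightarrow> real" where
  "path_len l p = sum_list (map l (path_edges p))"

(* shortest-path distance, +infinity if no path *)
definition sdist :: "'v set \<Rightarrow> ('v \<times> 'v) set \<Rightarrow> ('v \<times> 'v \<Rightarrow> real) \<Rightarrow> 'v \<Rightarrow> 'v \<Rightarrow> ereal" where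
  "sdist VV EE l u v = (INF p \<in> {p. dpath VV EE p u v}. ereal (path_len l p))"

definition dball :: "'v set \<Rightarrow> ('v \<times> 'v) set \<Rightarrow> ('v \<times> 'v \<Rightarrow> real) \<Rightarrow> 'v \<Rightarrow> real \<Rightarrow> 'v set" where
  "dball VV EE l v r = {u \<in> VV. sdist VV EE l v u \<le> ereal r}"

definition out_cut :: "('v \<times> 'v) set \<Rightarrow> 'v set \<Rightarrow> ('v \<times> 'v) set" where
  "out_cut EE A = {e \<in> EE. fst e \<in> A \<and> snd e \<notin> A}"

definition dir_mc_feasible :: "'v set \<Rightarrow> ('v \<times> 'v) set \<Rightarrow> (nat \<Rightarrow> 'v) \<Rightarrow> nat \<Rightarrow> ('v \<times> 'v \<Rightarrow> real) \<Rightarrow> bool" where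
  "dir_mc_feasible V E s k x \<longleftrightarrow>
     (\<forall>e\<in>E. 0 \<le> x e) \<and>
     (\<forall>i\<in>{1..k}. \<forall>j\<in>{1..k}. i \<noteq> j \<longrightarrow>
        (\<forall>p. dpath V E p (s i) (s j) \<longrightarrow> 1 \<le> path_len x p))"

(* The graph G^+: original vertices Inl v, new vertices t_i = Inr i *)
definition plusV :: "'v set \<Rightarrow> nat \<Rightarrow> ('v + nat) set" where
  "plusV V k = Inl ` V \<union> Inr ` {1..k}"

definition plusE :: "('v \<times> 'v) set \<Rightarrow> (nat \<Rightarrow> 'v) \<Rightarrow> nat \<Rightarrow> (('v + nat) \<times> ('v + nat)) set" where
  "plusE E s k = (\<lambda>(a, b). (Inl a, Inl b)) ` E
     \<union> {(Inr i, Inl (s j)) | i j. i \<in> {1..k} \<and> j \<in> {1..k} \<and> i \<noteq> j}"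

definition plusx :: "('v \<times> 'v \<Rightarrow> real) \<Rightarrow> ('v + nat) \<times> ('v + nat) \<Rightarrow> real" where
  "plusx x e = (case e of (Inl a, Inl b) \<Rightarrow> x (a, b) | _ \<Rightarrow> 0)"

definition cutC :: "'v set \<Rightarrow> ('v \<times> 'v) set \<Rightarrow> (nat \<Rightarrow> 'v) \<Rightarrow> nat \<Rightarrow> ('v \<times> 'v \<Rightarrow> real) \<Rightarrow> real
    \<Rightarrow> (('v + nat) \<times> ('v + nat)) set" where
  "cutC V E s k x \<theta> = (\<Union>i\<in>{1..k}.
     out_cut (plusE E s k) (dball (plusV V k) (plusE E s k) (plusx x) (Inr i) \<theta>))"

end

theory Submission
  imports Defs
begin

text \<open>
  Every new vertex \<open>t\<^sub>i\<close> has zero-length edges to all terminals except \<open>s\<^sub>i\<close>, so a shortest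
  path from \<open>t\<^sub>i\<close> to a vertex \<open>u\<close> can be rerouted to start at any \<open>t\<^sub>j\<close> other than the one whose
  terminal it enters first. Hence the distances \<open>d(t\<^sub>i, u)\<close>, \<open>i = 1..k\<close>, take at most two values.
  An edge \<open>(u, v)\<close> leaves \<open>B(t\<^sub>i, \<theta>)\<close> only if \<open>d(t\<^sub>i, u) \<le> \<theta> < d(t\<^sub>i, u) + x\<^sub>u\<^sub>v\<close>, so it lies
  in \<open>C(\<theta>)\<close> only for \<open>\<theta>\<close> in the union of two intervals of length \<open>x\<^sub>u\<^sub>v\<close>, which has
  probability at most \<open>2 x\<^sub>u\<^sub>v\<close>. Feasibility of \<open>x\<close> is only used through \<open>x \<ge> 0\<close>.
\<close>

lemma path_edges_Nil [simp]: "path_edges [] = []"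
  and path_edges_singleton [simp]: "path_edges [a] = []"
  and path_edges_Cons_Cons [simp]: "path_edges (a # b # p) = (a, b) # path_edges (b # p)"
  by (simp_all add: path_edges_def)

lemma path_edges_append:
  "q \<noteq> [] \<Longrightarrow> path_edges (q @ r) = path_edges q @ path_edges (last q # r)"
proof (induction q)
  case (Cons a q)
  then show ?case by (cases q) auto
qed simp

lemma path_len_append:
  "q \<noteq> [] \<Longrightarrow> path_len l (q @ r) = path_len l q + path_len l (last q # r)"
  by (simp add: path_len_def path_edges_append)

lemma set_path_edges_subset: "dpath VV EE p a b \<Longrightarrow> set (path_edges p) \<subseteq> EE"
  by (auto simp: dpath_def path_edges_def set_zip nth_tl)

lemma dpath_take:
  assumes p: "dpath VV EE p a b" and n: "n < length p"
  shows "dpath VV EE (take (Suc n) p) a (p ! n)"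
  unfolding dpath_def
proof (intro conjI allI impI)
  show "take (Suc n) p \<noteq> []" "hd (take (Suc n) p) = a"
    using p n by (auto simp: dpath_def)
  show "last (take (Suc n) p) = p ! n" using n by (simp add: take_Suc_conv_app_nth)
  show "distinct (take (Suc n) p)" "set (take (Suc n) p) \<subseteq> VV"
    using p set_take_subset[of "Suc n" p] by (auto simp: dpath_def)
qed (use p in \<open>auto simp: dpath_def\<close>)

lemma dpath_snoc:
  assumes p: "dpath VV EE p a b" and "(b, c) \<in> EE" and "c \<in> VV" and "c \<notin> set p"
  shows "dpath VV EE (p @ [c]) a c"
  unfolding dpath_def
proof (intro conjI allI impI)
  fix n assume n: "Suc n < length (p @ [c])"
  have "p \<noteq> []" "last p = b" using p by (auto simp: dpath_def)
  then show "((p @ [c]) ! n, (p @ [c]) ! Suc n) \<in> EE"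
  proof (cases "Suc n < length p")
    case True
    then show ?thesis using p by (auto simp: dpath_def nth_append)
  next
    case False
    then have "Suc n = length p" using n by simp
    then have "p ! n = b" using \<open>p \<noteq> []\<close> \<open>last p = b\<close> by (metis diff_Suc_1 last_conv_nth)
    then show ?thesis using \<open>(b, c) \<in> EE\<close> \<open>Suc n = length p\<close> by (auto simp: nth_append)
  qed
qed (use assms in \<open>auto simp: dpath_def\<close>)

lemma path_len_prefix_le:
  assumes "dpath VV EE (q @ r) a b" and "q \<noteq> []" and "\<forall>e\<in>EE. 0 \<le> l e"
  shows "path_len l q \<le> path_len l (q @ r)"
proof -
  have "set (path_edges (last q # r)) \<subseteq> EE"
    using set_path_edges_subset[OF assms(1)] path_edges_append[OF assms(2)] by auto
  then have "0 \<le> path_len l (last q # r)"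
    unfolding path_len_def using assms(3) by (fastforce intro: sum_list_nonneg)
  then show ?thesis using path_len_append[OF assms(2)] by simp
qed

text \<open>Either append \<open>c\<close> or, to keep the path simple, truncate it at its earlier visit of \<open>c\<close>.\<close>

lemma dpath_extend:
  assumes p: "dpath VV EE p a b" and bc: "(b, c) \<in> EE" and "c \<in> VV"
    and nonneg: "\<forall>e\<in>EE. 0 \<le> l e"
  obtains q where "dpath VV EE q a c" and "path_len l q \<le> path_len l p + l (b, c)"
proof (cases "c \<in> set p")
  case False
  have "p \<noteq> []" "last p = b" using p by (auto simp: dpath_def)
  then have "path_len l (p @ [c]) = path_len l p + l (b, c)"
    using path_len_append[of p l "[c]"] by (simp add: path_len_def)
  with dpath_snoc[OF assms(1-3) False] that show ?thesis by simp
next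
  case True
  then obtain n where n: "n < length p" "p ! n = c" by (metis in_set_conv_nth)
  let ?q = "take (Suc n) p"
  have "path_len l ?q \<le> path_len l p"
    using path_len_prefix_le[of VV EE ?q "drop (Suc n) p" a b l] p n nonneg by (simp add: dpath_def)
  moreover have "0 \<le> l (b, c)" using nonneg bc by auto
  ultimately show ?thesis using that dpath_take[OF p n(1)] n(2) by simp
qed

lemma sdist_le_path_len: "dpath VV EE p a b \<Longrightarrow> sdist VV EE l a b \<le> ereal (path_len l p)"
  unfolding sdist_def by (rule INF_lower2[of p]) auto

lemma sdist_triangle:
  assumes "\<forall>e\<in>EE. 0 \<le> l e" and "(b, c) \<in> EE" and "c \<in> VV"
  shows "sdist VV EE l a c \<le> sdist VV EE l a b + ereal (l (b, c))"
proof -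
  have "sdist VV EE l a c - ereal (l (b, c)) \<le> ereal (path_len l p)"
    if p: "dpath VV EE p a b" for p
  proof -
    obtain q where "dpath VV EE q a c" "path_len l q \<le> path_len l p + l (b, c)"
      using dpath_extend[OF p assms(2,3,1)] .
    then have "sdist VV EE l a c \<le> ereal (path_len l p + l (b, c))"
      by (meson ereal_less_eq(3) order_trans sdist_le_path_len)
    then show ?thesis by (simp add: ereal_minus_le)
  qed
  then have "sdist VV EE l a c - ereal (l (b, c)) \<le> sdist VV EE l a b"
    unfolding sdist_def[of VV EE l a b] by (auto intro: INF_greatest)
  then show ?thesis by (simp add: ereal_minus_le)
qed

lemma finite_image_subset_two_if_min_le:
  fixes D :: "'i \<Rightarrow> 'a::linorder"
  assumes "finite I"
    and min_le: "\<And>i i' j. i \<in> I \<Longrightarrow> i' \<in> I \<Longrightarrow> i \<noteq> i' \<Longrightarrow> j \<in> I \<Longrightarrow> min (D i) (D i') \<le> D j"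
  shows "\<exists>a b. D ` I \<subseteq> {a, b}"
proof (cases "I = {}")
  case False
  define m where "m = Min (D ` I)"
  have "m \<in> D ` I" unfolding m_def using \<open>finite I\<close> False by (intro Min_in) auto
  then obtain i0 where i0: "i0 \<in> I" "D i0 = m" by auto
  have m_le: "m \<le> D i" if "i \<in> I" for i
    using \<open>finite I\<close> that unfolding m_def by auto
  show ?thesis
  proof (cases "D ` I \<subseteq> {m}")
    case False
    then obtain i1 where i1: "i1 \<in> I" "D i1 \<noteq> m" by auto
    have "D i \<in> {m, D i1}" if i: "i \<in> I" for i
    proof (rule ccontr)
      assume "D i \<notin> {m, D i1}"
      then have "i \<noteq> i1" and "m < D i" "m < D i1"
        using m_le[OF i] m_le[OF i1(1)] i1(2) by auto
      then show False using min_le[OF i i1(1) _ i0(1)] i0(2) by (auto simp: min_def split: if_splits)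
    qed
    then show ?thesis by blast
  qed blast
qed simp

lemma plusx_nonneg: "\<forall>e\<in>E. 0 \<le> x e \<Longrightarrow> \<forall>e\<in>plusE E s k. 0 \<le> plusx x e"
  by (auto simp: plusE_def plusx_def)

lemma path_len_plusx_Inr_Cons: "path_len (plusx x) (Inr i # b # p) = path_len (plusx x) (b # p)"
  by (simp add: path_len_def plusx_def)

text \<open>No edge of \<open>G\<^sup>+\<close> enters a new vertex \<open>t\<^sub>i\<close>.\<close>

lemma dpath_plus_tl_Inl:
  assumes p: "dpath (plusV V k) (plusE E s k) p a b"
  shows "set (tl p) \<subseteq> range Inl"
proof
  fix z assume "z \<in> set (tl p)"
  then obtain m where "m < length (tl p)" "z = tl p ! m" by (metis in_set_conv_nth)
  then have "Suc m < length p" "z = p ! Suc m" by (auto simp: nth_tl)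
  then have "(p ! m, z) \<in> plusE E s k" using p by (auto simp: dpath_def)
  then show "z \<in> range Inl" by (auto simp: plusE_def)
qed

lemma dpath_plus_restart:
  assumes p: "dpath (plusV V k) (plusE E s k) (Inr i # Inl (s j) # r) (Inr i) z"
    and t: "t \<in> {1..k}" "t \<noteq> j" and j: "j \<in> {1..k}"
  shows "dpath (plusV V k) (plusE E s k) (Inr t # Inl (s j) # r) (Inr t) z"
  unfolding dpath_def
proof (intro conjI allI impI)
  have "Inr t \<notin> set (Inl (s j) # r)" using dpath_plus_tl_Inl[OF p] by auto
  then show "distinct (Inr t # Inl (s j) # r)" using p by (simp add: dpath_def)
  fix n assume n: "Suc n < length (Inr t # Inl (s j) # r)"
  show "((Inr t # Inl (s j) # r) ! n, (Inr t # Inl (s j) # r) ! Suc n) \<in> plusE E s k"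
  proof (cases n)
    case 0
    then show ?thesis using t j by (auto simp: plusE_def)
  next
    case (Suc m)
    then show ?thesis using p n unfolding dpath_def by (metis length_Cons nth_Cons_Suc)
  qed
qed (use p t in \<open>auto simp: dpath_def plusV_def\<close>)

text \<open>
  A path from \<open>t\<^sub>i\<^sub>'\<^sub>'\<close> first enters some terminal \<open>s\<^sub>j\<close> at no cost; one of \<open>t\<^sub>i\<close>, \<open>t\<^sub>i\<^sub>'\<close>
  also has an edge to \<open>s\<^sub>j\<close>.
\<close>

lemma sdist_plus_min_le:
  assumes i: "i \<in> {1..k}" "i' \<in> {1..k}" "i \<noteq> i'" and i'': "i'' \<in> {1..k}"
  shows "min (sdist (plusV V k) (plusE E s k) (plusx x) (Inr i) (Inl u))
             (sdist (plusV V k) (plusE E s k) (plusx x) (Inr i') (Inl u))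
         \<le> sdist (plusV V k) (plusE E s k) (plusx x) (Inr i'') (Inl u)"
  unfolding sdist_def[of _ _ _ "Inr i''"]
proof (rule INF_greatest)
  let ?VV = "plusV V k" and ?EE = "plusE E s k"
  fix p assume "p \<in> {p. dpath ?VV ?EE p (Inr i'') (Inl u)}"
  then have p: "dpath ?VV ?EE p (Inr i'') (Inl u)" by simp
  then obtain b r where p_eq: "p = Inr i'' # b # r"
    by (cases p rule: remdups_adj.cases) (auto simp: dpath_def)
  then have "(Inr i'', b) \<in> ?EE" using p unfolding dpath_def by force
  then obtain j where j: "b = Inl (s j)" "j \<in> {1..k}" by (auto simp: plusE_def)
  obtain t where t: "t \<in> {i, i'}" "t \<noteq> j" using i(3) by auto
  have "dpath ?VV ?EE (Inr t # b # r) (Inr t) (Inl u)"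
    using dpath_plus_restart[of V k E s i'' j r "Inl u" t] p p_eq i t j by auto
  moreover have "path_len (plusx x) (Inr t # b # r) = path_len (plusx x) p"
    using p_eq by (simp add: path_len_plusx_Inr_Cons)
  ultimately have "sdist ?VV ?EE (plusx x) (Inr t) (Inl u) \<le> ereal (path_len (plusx x) p)"
    by (metis sdist_le_path_len)
  then show "min (sdist ?VV ?EE (plusx x) (Inr i) (Inl u)) (sdist ?VV ?EE (plusx x) (Inr i') (Inl u))
      \<le> ereal (path_len (plusx x) p)"
    using t(1) by (auto intro: min.coboundedI1 min.coboundedI2 order_trans)
qed

lemma sdist_plus_two_values:
  "\<exists>a b. (\<lambda>i. sdist (plusV V k) (plusE E s k) (plusx x) (Inr i) (Inl u)) ` {1..k} \<subseteq> {a, b}"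
  by (rule finite_image_subset_two_if_min_le) (auto intro: sdist_plus_min_le)

lemma cutC_edge_interval:
  assumes "\<forall>e\<in>E. 0 \<le> x e" and "E \<subseteq> V \<times> V" and uv: "(u, v) \<in> E"
    and "(Inl u, Inl v) \<in> cutC V E s k x \<theta>"
  shows "\<exists>i\<in>{1..k}. \<theta> \<in> {real_of_ereal (sdist (plusV V k) (plusE E s k) (plusx x) (Inr i) (Inl u)) ..<
              real_of_ereal (sdist (plusV V k) (plusE E s k) (plusx x) (Inr i) (Inl u)) + x (u, v)}"
proof -
  let ?d = "sdist (plusV V k) (plusE E s k) (plusx x)"
  obtain i where i: "i \<in> {1..k}" "?d (Inr i) (Inl u) \<le> ereal \<theta>" "\<not> ?d (Inr i) (Inl v) \<le> ereal \<theta>"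
    using assms by (auto simp: cutC_def out_cut_def dball_def plusV_def)
  have "(Inl u, Inl v) \<in> plusE E s k" using uv by (force simp: plusE_def)
  moreover have "Inl v \<in> plusV V k" using assms(2) uv by (auto simp: plusV_def)
  ultimately have "?d (Inr i) (Inl v) \<le> ?d (Inr i) (Inl u) + ereal (x (u, v))"
    using sdist_triangle[OF plusx_nonneg[OF assms(1)]] by (fastforce simp: plusx_def)
  then have "ereal \<theta> < ?d (Inr i) (Inl u) + ereal (x (u, v))" using i(3) by simp
  then have "\<theta> \<in> {real_of_ereal (?d (Inr i) (Inl u)) ..< real_of_ereal (?d (Inr i) (Inl u)) + x (u, v)}"
    using i(2) by (cases "?d (Inr i) (Inl u)") auto
  then show ?thesis using i(1) by blast
qed

lemma emeasure_uniform_unit_interval_le: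
  assumes "0 \<le> c"
  shows "emeasure (uniform_measure lborel {0<..<1::real}) {a..<a + c} \<le> ennreal c"
proof -
  have "emeasure (uniform_measure lborel {0<..<1::real}) {a..<a + c}
      = emeasure lborel ({0<..<1} \<inter> {a..<a + c})"
    by (simp add: divide_ennreal_def)
  also have "\<dots> \<le> emeasure lborel {a..<a + c}" by (rule emeasure_mono) auto
  finally show ?thesis using assms by simp
qed

lemma nn_integral_uniform_weight_le_two_intervals:
  fixes w c a b :: "'e \<Rightarrow> real" and P :: "real \<Rightarrow> 'e \<Rightarrow> bool"
  assumes "finite E" and w: "\<forall>e\<in>E. 0 \<le> w e" and c: "\<forall>e\<in>E. 0 \<le> c e"
    and cover: "\<And>\<theta> e. e \<in> E \<Longrightarrow> P \<theta> e \<Longrightarrow> \<theta> \<in> {a e..<a e + c e} \<union> {b e..<b e + c e}"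
  shows "(\<integral>\<^sup>+ \<theta>. ennreal (\<Sum>e\<in>{e\<in>E. P \<theta> e}. w e) \<partial>uniform_measure lborel {0<..<1})
         \<le> ennreal (2 * (\<Sum>e\<in>E. w e * c e))"
proof -
  let ?U = "uniform_measure lborel {0<..<1::real}"
  let ?I = "\<lambda>e. {a e..<a e + c e}" and ?J = "\<lambda>e. {b e..<b e + c e}"
  define g where "g \<theta> = (\<Sum>e\<in>E. ennreal (w e) * (indicator (?I e) \<theta> + indicator (?J e) \<theta>))"
    for \<theta> :: real
  have "ennreal (\<Sum>e\<in>{e\<in>E. P \<theta> e}. w e) \<le> g \<theta>" for \<theta>
  proof -
    have "ennreal (\<Sum>e\<in>{e\<in>E. P \<theta> e}. w e) = (\<Sum>e\<in>{e\<in>E. P \<theta> e}. ennreal (w e))"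
      using w by (intro sum_ennreal[symmetric]) auto
    also have "\<dots> \<le> (\<Sum>e\<in>{e\<in>E. P \<theta> e}. ennreal (w e) * (indicator (?I e) \<theta> + indicator (?J e) \<theta>))"
    proof (rule sum_mono)
      fix e assume "e \<in> {e\<in>E. P \<theta> e}"
      then have "1 \<le> (indicator (?I e) \<theta> + indicator (?J e) \<theta> :: ennreal)"
        using cover[of e \<theta>] by (auto simp: indicator_def)
      then show "ennreal (w e) \<le> ennreal (w e) * (indicator (?I e) \<theta> + indicator (?J e) \<theta>)"
        by (metis mult.right_neutral mult_left_mono zero_le)
    qed
    also have "\<dots> \<le> g \<theta>" unfolding g_def using \<open>finite E\<close> by (intro sum_mono2) auto
    finally show ?thesis .
  qed
  then have "(\<integral>\<^sup>+ \<theta>. ennreal (\<Sum>e\<in>{e\<in>E. P \<theta> e}. w e) \<partial>?U) \<le> (\<integral>\<^sup>+ \<theta>. g \<theta> \<partial>?U)"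
    by (intro nn_integral_mono)
  also have "\<dots> = (\<Sum>e\<in>E. ennreal (w e) * (emeasure ?U (?I e) + emeasure ?U (?J e)))"
    unfolding g_def by (subst nn_integral_sum) (auto simp: nn_integral_cmult nn_integral_add)
  also have "\<dots> \<le> (\<Sum>e\<in>E. ennreal (w e) * (ennreal (c e) + ennreal (c e)))"
    using c by (intro sum_mono mult_left_mono add_mono emeasure_uniform_unit_interval_le) auto
  also have "\<dots> = ennreal (2 * (\<Sum>e\<in>E. w e * c e))"
    using w c by (simp add: sum_ennreal sum_distrib_left ennreal_plus[symmetric]
        ennreal_mult[symmetric] mult.left_commute del: ennreal_plus)
  finally show ?thesis .
qed

theorem mainTheorem4:
  fixes V :: "'v set" and E :: "('v \<times> 'v) set" and w x :: "'v \<times> 'v \<Rightarrow> real"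
    and s :: "nat \<Rightarrow> 'v" and k :: nat
  assumes "finite V" and "E \<subseteq> V \<times> V"
    and "\<forall>e\<in>E. 0 \<le> w e"
    and "2 \<le> k" and "inj_on s {1..k}" and "s ` {1..k} \<subseteq> V"
    and "dir_mc_feasible V E s k x"
  shows "(\<integral>\<^sup>+ \<theta>. ennreal (\<Sum>e\<in>{e\<in>E. (Inl (fst e), Inl (snd e)) \<in> cutC V E s k x \<theta>}. w e)
            \<partial>(uniform_measure lborel {0<..<1::real}))
         \<le> ennreal (2 * (\<Sum>e\<in>E. w e * x e))"
proof -
  let ?d = "\<lambda>i u. sdist (plusV V k) (plusE E s k) (plusx x) (Inr i) (Inl u)"
  have "finite E" using assms(1,2) by (meson finite_SigmaI finite_subset)
  have nonneg: "\<forall>e\<in>E. 0 \<le> x e" using assms(7) by (simp add: dir_mc_feasible_def)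
  obtain a b where ab: "\<And>u. (\<lambda>i. ?d i u) ` {1..k} \<subseteq> {a u, b u}"
    using sdist_plus_two_values[of V k E s x] by metis
  have "\<theta> \<in> {real_of_ereal (a (fst e))..<real_of_ereal (a (fst e)) + x e}
      \<union> {real_of_ereal (b (fst e))..<real_of_ereal (b (fst e)) + x e}"
    if e: "e \<in> E" and cut: "(Inl (fst e), Inl (snd e)) \<in> cutC V E s k x \<theta>" for \<theta> e
  proof -
    obtain i where "i \<in> {1..k}"
        "\<theta> \<in> {real_of_ereal (?d i (fst e)) ..< real_of_ereal (?d i (fst e)) + x e}"
      using cutC_edge_interval[OF nonneg assms(2) _ cut] e by auto
    moreover have "?d i (fst e) \<in> {a (fst e), b (fst e)}" using ab \<open>i \<in> {1..k}\<close> by blast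
    ultimately show ?thesis by auto
  qed
  then show ?thesis
    by (rule nn_integral_uniform_weight_le_two_intervals[OF \<open>finite E\<close> assms(3) nonneg])
qed

end
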